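(* Let $\mathcal{O}\subset\mathbb{R}^n$ be open, let $V:\mathcal{O}\to\mathbb{R}$ be locally Lipschitz, let $F:\mathcal{O}\rightrightarrows\mathbb{R}^n$ be inner semicontinuous and locally bounded in $\mathcal{O}$, let $\mathcal{A}\subset\mathbb{R}^n$ be closed and let $\gamma:\mathbb{R}_{\geq 0}\to\mathbb{R}$ be continuous. Suppose that $$\langle \nabla V(y), f\rangle \leq \gamma(|y|_\mathcal{A})\quad \text{for all } y\in\mathcal{O}\setminus\mathcal{N}_V \text{ and all } f\in F(y).$$ Then $$\langle v, f\rangle\leq \gamma(|x|_\mathcal{A})\quad\text{for all } x\in\mathcal{O},\ \text{all } v\in\partial V(x),\ \text{all } f\in F(x).$$
   Context: $|x|_\mathcal{A}=\min_{y\in\mathcal{A}}|x-y|$ is the Euclidean distance to $\mathcal{A}$. $\mathcal{N}_V:=\{x\in\mathcal{O}: \nabla V(x)\text{ does not exist}\}$. The Clarke generalized gradient is $\partial V(x):=\mathrm{co}\{v\in\mathbb{R}^n: \exists x_k\to x,\ x_k\notin\mathcal{N}_V,\ v=\lim_k\nabla V(x_k)\}$. A set-valued map $F:\mathcal{C}\rightrightarrows\mathbb{R}^n$ is inner semicontinuous relative to $\mathcal{C}$ at $x\in\mathcal{C}$ if for every $f\in F(x)$ and every sequence $x_k\in\mathcal{C}$ with $x_k\to x$ there exist $f_k\in F(x_k)$ with $f_k\to f$; it is inner semicontinuous in $\mathcal{C}$ if this holds at every $x\in\mathcal{C}$. $F$ is locally bounded in $\mathcal{C}$ if every $x\in\mathcal{C}$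 has a neighborhood $\mathcal{U}$ with $F(\mathcal{U}\cap\mathcal{C})$ bounded. *)

theory Defs
  imports "HOL-Analysis.Analysis"
begin

definition is_grad :: "('a::euclidean_space \<Rightarrow> real) \<Rightarrow> 'a \<Rightarrow> 'a \<Rightarrow> bool" where
  "is_grad V x v \<longleftrightarrow> (V has_derivative (\<lambda>h. v \<bullet> h)) (at x)"

definition nondiff_set :: "'a::euclidean_space set \<Rightarrow> ('a \<Rightarrow> real) \<Rightarrow> 'a set" where
  "nondiff_set Om V = {x \<in> Om. \<not> (\<exists>v. is_grad V x v)}"

definition clarke_grad :: "'a::euclidean_space set \<Rightarrow> ('a \<Rightarrow> real) \<Rightarrow> 'a \<Rightarrow> 'a set" where
  "clarke_grad Om V x = convex hull {v. \<exists>xs vs. (\<forall>k. xs k \<in> Om - nondiff_set Om V \<and> is_grad V (xs k) (vs k))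
        \<and> xs \<longlonglongrightarrow> x \<and> vs \<longlonglongrightarrow> v}"

definition locally_lipschitz_in :: "'a::euclidean_space set \<Rightarrow> ('a \<Rightarrow> real) \<Rightarrow> bool" where
  "locally_lipschitz_in Om V \<longleftrightarrow>
     (\<forall>x\<in>Om. \<exists>U. open U \<and> x \<in> U \<and> U \<subseteq> Om \<and> (\<exists>L. L-lipschitz_on U V))"

definition inner_semicontinuous_in :: "'a::euclidean_space set \<Rightarrow> ('a \<Rightarrow> 'a set) \<Rightarrow> bool" where
  "inner_semicontinuous_in C F \<longleftrightarrow>
     (\<forall>x\<in>C. \<forall>f\<in>F x. \<forall>xs. (\<forall>k. xs k \<in> C) \<and> xs \<longlonglongrightarrow> x \<longrightarrow>
        (\<exists>fs. (\<forall>k. fs k \<in> F (xs k)) \<and> fs \<longlonglongrightarrow> f))"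

definition locally_bounded_in :: "'a::euclidean_space set \<Rightarrow> ('a \<Rightarrow> 'a set) \<Rightarrow> bool" where
  "locally_bounded_in C F \<longleftrightarrow>
     (\<forall>x\<in>C. \<exists>U. open U \<and> x \<in> U \<and> bounded (\<Union>(F ` (U \<inter> C))))"

end

theory Submission
  imports Defs
begin

text \<open>
  Along a sequence \<open>x\<^sub>k \<rightarrow> x\<close> of differentiability points with \<open>\<nabla>V(x\<^sub>k) \<rightarrow> v\<close>, inner
  semicontinuity of \<open>F\<close> approximates any \<open>f \<in> F(x)\<close> by \<open>f\<^sub>k \<in> F(x\<^sub>k)\<close>, and continuity of
  \<open>\<gamma>(|\<cdot>|\<^sub>\<A>)\<close> lets the inequality \<open>\<langle>\<nabla>V(x\<^sub>k), f\<^sub>k\<rangle> \<le> \<gamma>(|x\<^sub>k|\<^sub>\<A>)\<close> pass to the limit. For fixed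
  \<open>f\<close> the admissible \<open>v\<close> form a half-space, which is convex, so the inequality survives
  the convex hull in the definition of \<open>\<partial>V(x)\<close>.
\<close>

definition limiting_grads :: "'a::euclidean_space set \<Rightarrow> ('a \<Rightarrow> real) \<Rightarrow> 'a \<Rightarrow> 'a set" where
  "limiting_grads Om V x = {v. \<exists>xs vs. (\<forall>k. xs k \<in> Om - nondiff_set Om V \<and> is_grad V (xs k) (vs k))
        \<and> xs \<longlonglongrightarrow> x \<and> vs \<longlonglongrightarrow> v}"

lemma clarke_grad_eq_convex_hull_limiting_grads:
  "clarke_grad Om V x = convex hull limiting_grads Om V x"
  by (simp add: clarke_grad_def limiting_grads_def)

lemma convex_hull_inner_le:
  fixes S :: "'a::real_inner set"
  assumes "\<forall>w\<in>S. w \<bullet> f \<le> c" and "v \<in> convex hull S"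
  shows "v \<bullet> f \<le> c"
proof -
  have "convex {w. w \<bullet> f \<le> c}"
    using convex_halfspace_le[of f c] by (simp add: inner_commute)
  then have "convex hull S \<subseteq> {w. w \<bullet> f \<le> c}"
    using assms(1) by (intro hull_minimal) auto
  then show ?thesis
    using assms(2) by blast
qed

lemma limiting_grad_inner_le:
  fixes F :: "'a::euclidean_space \<Rightarrow> 'a set" and b :: "'a \<Rightarrow> real"
  assumes isc: "inner_semicontinuous_in Om F"
    and b_cont: "continuous_on Om b"
    and grad_le: "\<forall>y \<in> Om - nondiff_set Om V. \<forall>g f. is_grad V y g \<and> f \<in> F y \<longrightarrow> g \<bullet> f \<le> b y"
    and x: "x \<in> Om" and v: "v \<in> limiting_grads Om V x" and f: "f \<in> F x"
  shows "v \<bullet> f \<le> b x"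
proof -
  obtain xs vs where xs: "\<forall>k. xs k \<in> Om - nondiff_set Om V \<and> is_grad V (xs k) (vs k)"
    and xs_lim: "xs \<longlonglongrightarrow> x" and vs_lim: "vs \<longlonglongrightarrow> v"
    using v unfolding limiting_grads_def by blast
  obtain fs where fs: "\<forall>k. fs k \<in> F (xs k)" and fs_lim: "fs \<longlonglongrightarrow> f"
    using isc x f xs xs_lim unfolding inner_semicontinuous_in_def by blast
  have "(\<lambda>k. vs k \<bullet> fs k) \<longlonglongrightarrow> v \<bullet> f"
    using vs_lim fs_lim by (rule tendsto_inner)
  moreover have "(\<lambda>k. b (xs k)) \<longlonglongrightarrow> b x"
    using b_cont xs_lim x xs by (intro continuous_on_tendsto_compose[of Om b]) auto
  moreover have "\<forall>k. vs k \<bullet> fs k \<le> b (xs k)"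
    using grad_le xs fs by blast
  ultimately show ?thesis
    by (intro LIMSEQ_le) auto
qed

theorem proposition1:
  fixes Om :: "'a::euclidean_space set" and V :: "'a \<Rightarrow> real"
    and F :: "'a \<Rightarrow> 'a set" and A :: "'a set" and \<gamma> :: "real \<Rightarrow> real"
  assumes "open Om"
    and "locally_lipschitz_in Om V"
    and "inner_semicontinuous_in Om F"
    and "locally_bounded_in Om F"
    and "closed A"
    and "continuous_on {0..} \<gamma>"
    and "\<forall>y \<in> Om - nondiff_set Om V. \<forall>g f. is_grad V y g \<and> f \<in> F y \<longrightarrow> g \<bullet> f \<le> \<gamma> (infdist y A)"
  shows "\<forall>x\<in>Om. \<forall>v\<in>clarke_grad Om V x. \<forall>f\<in>F x. v \<bullet> f \<le> \<gamma> (infdist x A)"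
proof (intro ballI)
  fix x v f
  assume x: "x \<in> Om" and v: "v \<in> clarke_grad Om V x" and f: "f \<in> F x"
  have "continuous_on Om (\<lambda>y. \<gamma> (infdist y A))"
    using assms(6) continuous_on_infdist[OF continuous_on_id]
    by (rule continuous_on_compose2) (auto simp: infdist_nonneg)
  then have "\<forall>w \<in> limiting_grads Om V x. w \<bullet> f \<le> \<gamma> (infdist x A)"
    using limiting_grad_inner_le[OF assms(3) _ assms(7) x _ f] by blast
  then show "v \<bullet> f \<le> \<gamma> (infdist x A)"
    using v by (simp add: clarke_grad_eq_convex_hull_limiting_grads convex_hull_inner_le)
qed

end
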